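(* Let $a,b,q$ be complex numbers with $q\neq 0$. For every formal power series $F(z)\in\mathbb{C}[[z]]$ there is an expansion $$F(z)=\sum_{n=0}^{\infty}c_n\,z^{n}\frac{(az;q)_n}{(bz;q)_n},$$ with coefficients $c_n$ independent of $z$ given by $$c_n=[z^{n}]\Big\{F(z)\frac{(bz;q)_{n-1}}{(az;q)_n}\Big\}-a\sum_{k=0}^{n-1}B_{n-k,1}(a,b)\,q^{(n-k)k}\,[z^{k}]\Big\{F(z)\frac{(bz;q)_{k}}{(az;q)_{k+1}}\Big\},$$ where the numbers $B_{n,1}(a,b)$ ($n\ge 1$) are defined by the expansion in $\mathbb{C}[[z]]$ $$z=\sum_{n=1}^\infty B_{n,1}(a,b)\,z^n\frac{(az;q)_n}{(bz;q)_n}.$$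
   Context: For any integer $n$ (including negative $n$), $(x;q)_n=\prod_{j\ge0}(1-xq^j)/\prod_{j\ge 0}(1-xq^{n+j})$; thus $(x;q)_0=1$, $(x;q)_n=\prod_{j=0}^{n-1}(1-xq^j)$ for $n\ge1$, and $(x;q)_{-1}=1/(1-x/q)$. All such quotients with argument a multiple of $z$ are regarded as formal power series in $z$. For $f(z)=\sum_{n\ge0}a_nz^n\in\mathbb{C}[[z]]$, $[z^n]\{f(z)\}:=a_n$. Empty sums are $0$. The family $\{z^n(az;q)_n/(bz;q)_n\}_{n\ge0}$ is a basis (in the formal-series sense) of $\mathbb{C}[[z]]$, so the $B_{n,1}(a,b)$ are uniquely determined. *)

theory Defs
  imports Complex_Main "HOL-Computational_Algebra.Formal_Power_Series"
begin

text \<open>For n \<ge> 0: prod_{j<n} (1 - x q^j z); for n = -m < 0: 1 / prod_{i=1..m} (1 - x q^(-i) z),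
  which agrees with prod_{j\<ge>0}(1 - x q^j z) / prod_{j\<ge>0}(1 - x q^(n+j) z).\<close>
definition qpoch :: "complex \<Rightarrow> complex \<Rightarrow> int \<Rightarrow> complex fps" where
  "qpoch x q n =
     (if 0 \<le> n then (\<Prod>j<nat n. 1 - fps_const (x * q ^ j) * fps_X)
      else inverse (\<Prod>i\<in>{1..nat (- n)}. 1 - fps_const (x / q ^ i) * fps_X))"

definition qbasis :: "complex \<Rightarrow> complex \<Rightarrow> complex \<Rightarrow> nat \<Rightarrow> complex fps" where
  "qbasis a b q n = fps_X ^ n * qpoch a q (int n) * inverse (qpoch b q (int n))"

end

theory Submission
  imports Defs
begin

(* Write H_n = F (bz;q)_{n-1} / (az;q)_n, so that F = (az;q)_n / (bz;q)_{n-1} * H_n and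
   (1 - a q^n z) H_{n+1} = (1 - b q^{n-1} z) H_n.  The latter makes the partial sums of
   \<Sum>_n ([z^n] H_n - a q^n [z^n] H_{n+1} z) z^n (az;q)_n / (bz;q)_n telescope to
   (az;q)_N / (bz;q)_{N-1} times the truncation of H_N below z^N, which agrees with F modulo z^N.
   The unwanted terms a q^k [z^k] H_{k+1} z^{k+1} (az;q)_k / (bz;q)_k are re-expanded in the
   basis: substituting z := q^k z in the expansion z = \<Sum>_j B_{j,1} z^j (az;q)_j / (bz;q)_j and
   multiplying by z^k (az;q)_k / (bz;q)_k gives
   q^k z^{k+1} (az;q)_k / (bz;q)_k = \<Sum>_j B_{j,1} q^{jk} z^{k+j} (az;q)_{k+j} / (bz;q)_{k+j},
   which is where the correction sum in c_n comes from.  Convergence is z-adic throughout: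
   a series sums to F as soon as its N-th partial sum agrees with F modulo z^N. *)

unbundle fps_syntax

lemma fps_X_power_dvd_iff: "fps_X ^ n dvd (f :: 'a::comm_ring_1 fps) \<longleftrightarrow> (\<forall>i<n. f $ i = 0)"
proof
  assume "fps_X ^ n dvd f"
  then obtain g where "f = fps_X ^ n * g" by (elim dvdE)
  then show "\<forall>i<n. f $ i = 0" by (simp add: fps_X_power_mult_nth)
next
  assume "\<forall>i<n. f $ i = 0"
  then have "fps_cutoff n f = 0" by (simp add: fps_eq_iff)
  then have "f = fps_X ^ n * fps_shift n f" using fps_shift_cutoff'[of n f] by simp
  then show "fps_X ^ n dvd f" by (rule dvdI)
qed

lemma sums_fps_if_remainders_dvd:
  fixes f :: "nat \<Rightarrow> 'a::comm_ring_1 fps"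
  assumes "\<And>N. fps_X ^ N dvd F - (\<Sum>n<N. f n)"
  shows "f sums F"
  unfolding sums_def
proof (rule tendsto_fpsI)
  fix i
  have "(\<Sum>n<N. f n) $ i = F $ i" if "Suc i \<le> N" for N
    using assms[of N] that by (auto simp: fps_X_power_dvd_iff)
  then show "eventually (\<lambda>N. (\<Sum>n<N. f n) $ i = F $ i) sequentially"
    by (rule eventually_sequentiallyI)
qed

lemma sums_fps_remainder_dvd:
  fixes f :: "nat \<Rightarrow> 'a::comm_ring_1 fps"
  assumes "f sums F" and "\<And>n. M \<le> n \<Longrightarrow> fps_X ^ K dvd f n"
  shows "fps_X ^ K dvd F - (\<Sum>n<M. f n)"
  unfolding fps_X_power_dvd_iff
proof (intro allI impI)
  fix i assume "i < K"
  from assms(1) have "eventually (\<lambda>N. (\<Sum>n<N. f n) $ i = F $ i) sequentially"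
    by (simp add: sums_def tendsto_fps_iff)
  then obtain N0 where N0: "\<And>N. N0 \<le> N \<Longrightarrow> (\<Sum>n<N. f n) $ i = F $ i"
    by (auto simp: eventually_sequentially)
  define N where "N = max M N0"
  have N: "(\<Sum>n<N. f n) $ i = F $ i"
    using N0 by (simp add: N_def)
  have "M \<le> N" by (simp add: N_def)
  then have "(\<Sum>n<N. f n) = (\<Sum>n<M. f n) + (\<Sum>n\<in>{M..<N}. f n)"
    by (simp add: lessThan_atLeast0 sum.atLeastLessThan_concat)
  moreover have "fps_X ^ K dvd (\<Sum>n\<in>{M..<N}. f n)"
    using assms(2) by (auto intro: dvd_sum)
  ultimately show "(F - (\<Sum>n<M. f n)) $ i = 0"
    using N \<open>i < K\<close> by (auto simp: fps_X_power_dvd_iff)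
qed

lemma fps_X_power_dvd_compose_linear:
  "fps_X ^ n dvd (f :: 'a::comm_ring_1 fps) \<Longrightarrow> fps_X ^ n dvd f oo (fps_const c * fps_X)"
  by (simp add: fps_X_power_dvd_iff)

lemma fps_X_compose_linear: "fps_X oo (fps_const c * fps_X) = fps_const (c :: 'a::comm_ring_1) * fps_X"
  by (simp add: fps_eq_iff)

lemma fps_const_sum: "fps_const (\<Sum>k\<in>S. f k) = (\<Sum>k\<in>S. fps_const (f k))"
  by (induction S rule: infinite_finite_induct) (simp_all flip: fps_const_add)

lemma sum_lessThan_nested_swap:
  "(\<Sum>n<N. \<Sum>k<n. g n k) = (\<Sum>k<N. \<Sum>n\<in>{Suc k..<N}. g n k)"
proof (cases N)
  case (Suc m)
  have "(\<Sum>n<N. \<Sum>k<n. g n k) = (\<Sum>k<m. \<Sum>n=Suc k..m. g n k)"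
    using sum.nested_swap'[of g m] by (simp add: Suc lessThan_Suc_atMost)
  also have "\<dots> = (\<Sum>k<N. \<Sum>n\<in>{Suc k..<N}. g n k)"
    by (simp add: Suc atLeastLessThanSuc_atLeastAtMost)
  finally show ?thesis .
qed simp

lemma fps_nth_linear_factor_mult:
  "((1 - fps_const c * fps_X) * f) $ i = f $ i - (if i = 0 then 0 else c * f $ (i - 1))"
  for f :: "'a::comm_ring_1 fps"
  by (simp add: algebra_simps)

lemma fps_cutoff_linear_factor_step:
  fixes G0 G1 :: "'a::comm_ring_1 fps"
  assumes "(1 - fps_const c * fps_X) * G1 = (1 - fps_const d * fps_X) * G0"
  shows "(1 - fps_const c * fps_X) * fps_cutoff (Suc N) G1
           - (1 - fps_const d * fps_X) * fps_cutoff N G0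
       = fps_const (G0 $ N) * fps_X ^ N - fps_const (c * G1 $ N) * fps_X ^ Suc N"
proof (rule fps_ext)
  fix i
  have coeff: "G1 $ i - (if i = 0 then 0 else c * G1 $ (i - 1))
             = G0 $ i - (if i = 0 then 0 else d * G0 $ (i - 1))"
    using arg_cong[OF assms, of "\<lambda>f. f $ i"] by (simp only: fps_nth_linear_factor_mult)
  consider "i < N" | "i = N" | "i = Suc N" | "Suc N < i" by linarith
  then show "((1 - fps_const c * fps_X) * fps_cutoff (Suc N) G1
        - (1 - fps_const d * fps_X) * fps_cutoff N G0) $ i
      = (fps_const (G0 $ N) * fps_X ^ N - fps_const (c * G1 $ N) * fps_X ^ Suc N) $ i"
    by cases (use coeff in \<open>auto simp: fps_nth_linear_factor_mult split: nat.splits\<close>)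
qed

lemma qpoch_Suc: "qpoch x q (int (Suc n)) = qpoch x q (int n) * (1 - fps_const (x * q ^ n) * fps_X)"
  by (simp add: qpoch_def del: of_nat_Suc)

lemma qpoch_Suc_minus_1 [simp]: "qpoch x q (int (Suc n) - 1) = qpoch x q (int n)"
  by simp

lemma qpoch_0 [simp]: "qpoch x q 0 = 1"
  by (simp add: qpoch_def)

lemma qpoch_nth_0: "qpoch x q (int n) $ 0 = 1"
  by (induction n) (simp_all add: qpoch_Suc del: of_nat_Suc)

lemma qpoch_pred_nth_0: "qpoch x q (int n - 1) $ 0 = 1"
proof (cases n)
  case 0 then show ?thesis by (simp add: qpoch_def fps_inverse_def)
next
  case (Suc m) then show ?thesis using qpoch_nth_0[of x q m] by simp
qed

lemma qpoch_eq_qpoch_pred_mult: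
  assumes "q \<noteq> 0"
  shows "qpoch x q (int n) = qpoch x q (int n - 1) * (1 - fps_const (x * q ^ n / q) * fps_X)"
proof (cases n)
  case 0
  have "inverse (1 - fps_const (x / q) * fps_X) * (1 - fps_const (x / q) * fps_X) = 1"
    by (rule inverse_mult_eq_1) simp
  with 0 show ?thesis by (simp add: qpoch_def)
next
  case (Suc m)
  with assms show ?thesis by (simp add: qpoch_Suc del: of_nat_Suc)
qed

lemma qpoch_add: "qpoch x q (int (k + j)) = qpoch x q (int k) * qpoch (q ^ k * x) q (int j)"
  by (induction j) (simp_all add: qpoch_Suc power_add mult_ac del: of_nat_Suc)

lemma qpoch_compose_linear:
  "qpoch x q (int n) oo (fps_const c * fps_X) = qpoch (c * x) q (int n)"
  by (induction n)
     (simp_all add: qpoch_Suc fps_compose_mult_distrib fps_compose_sub_distrib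
        fps_X_compose_linear mult_ac flip: fps_const_mult_apply_left del: of_nat_Suc)

lemma fps_X_power_dvd_qbasis: "fps_X ^ n dvd qbasis a b q n"
  by (simp add: qbasis_def mult.assoc)

lemma qbasis_mult_compose_linear:
  "qbasis a b q k * (qbasis a b q j oo (fps_const (q ^ k) * fps_X))
     = fps_const (q ^ (j * k)) * qbasis a b q (k + j)"
proof -
  let ?s = "fps_const (q ^ k) * fps_X"
  have "inverse (qpoch b q (int j)) oo ?s = inverse (qpoch (q ^ k * b) q (int j))"
    by (simp add: fps_inverse_compose qpoch_nth_0 qpoch_compose_linear)
  moreover have "fps_X ^ j oo ?s = fps_const (q ^ (j * k)) * fps_X ^ j"
    by (simp add: fps_X_compose_linear power_mult_distrib mult.commute[of j k] power_mult
        flip: fps_compose_power)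
  ultimately have qj: "qbasis a b q j oo ?s = fps_const (q ^ (j * k)) * fps_X ^ j
      * qpoch (q ^ k * a) q (int j) * inverse (qpoch (q ^ k * b) q (int j))"
    by (simp add: qbasis_def fps_compose_mult_distrib qpoch_compose_linear)
  have "qbasis a b q k * (qbasis a b q j oo ?s)
      = fps_X ^ k * qpoch a q (int k) * inverse (qpoch b q (int k))
        * (fps_const (q ^ (j * k)) * fps_X ^ j
           * qpoch (q ^ k * a) q (int j) * inverse (qpoch (q ^ k * b) q (int j)))"
    by (subst qj) (simp only: qbasis_def)
  also have "\<dots> = fps_const (q ^ (j * k)) * (fps_X ^ k * fps_X ^ j
      * (qpoch a q (int k) * qpoch (q ^ k * a) q (int j))
      * (inverse (qpoch b q (int k)) * inverse (qpoch (q ^ k * b) q (int j))))"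
    by (simp only: mult_ac)
  also have "\<dots> = fps_const (q ^ (j * k)) * qbasis a b q (k + j)"
    by (simp only: qbasis_def power_add qpoch_add fps_inverse_mult)
  finally show ?thesis .
qed

definition qreduced ::
    "complex \<Rightarrow> complex \<Rightarrow> complex \<Rightarrow> complex fps \<Rightarrow> nat \<Rightarrow> complex fps" where
  "qreduced a b q F n = F * qpoch b q (int n - 1) * inverse (qpoch a q (int n))"

lemma qreduced_cancel:
  "qpoch a q (int n) * inverse (qpoch b q (int n - 1)) * qreduced a b q F n = F"
proof -
  have "qpoch a q (int n) * inverse (qpoch b q (int n - 1)) * qreduced a b q F n
      = F * (qpoch a q (int n) * inverse (qpoch a q (int n)))
          * (inverse (qpoch b q (int n - 1)) * qpoch b q (int n - 1))"
    by (simp only: qreduced_def mult_ac)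
  also have "\<dots> = F"
    by (simp add: inverse_mult_eq_1 inverse_mult_eq_1' qpoch_nth_0 qpoch_pred_nth_0)
  finally show ?thesis .
qed

lemma qreduced_Suc:
  assumes "q \<noteq> 0"
  shows "(1 - fps_const (a * q ^ n) * fps_X) * qreduced a b q F (Suc n)
       = (1 - fps_const (b * q ^ n / q) * fps_X) * qreduced a b q F n"
proof -
  let ?La = "1 - fps_const (a * q ^ n) * fps_X"
  let ?Lb = "1 - fps_const (b * q ^ n / q) * fps_X"
  have "qreduced a b q F (Suc n)
      = F * (qpoch b q (int n - 1) * ?Lb) * (inverse (qpoch a q (int n)) * inverse ?La)"
    by (simp add: qreduced_def qpoch_Suc fps_inverse_mult
        flip: qpoch_eq_qpoch_pred_mult[OF assms] del: of_nat_Suc)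
  then have "?La * qreduced a b q F (Suc n) = ?Lb * qreduced a b q F n * (?La * inverse ?La)"
    by (simp only: qreduced_def mult_ac)
  then show ?thesis
    by (simp add: inverse_mult_eq_1')
qed

lemma qreduced_telescoping:
  assumes "q \<noteq> 0"
  shows "(\<Sum>n<N. fps_const (qreduced a b q F n $ n) * qbasis a b q n
            - fps_const (a * q ^ n * qreduced a b q F (Suc n) $ n) * fps_X * qbasis a b q n)
       = qpoch a q (int N) * inverse (qpoch b q (int N - 1)) * fps_cutoff N (qreduced a b q F N)"
proof (induction N)
  case 0
  show ?case by simp
next
  case (Suc N)
  let ?H = "qreduced a b q F"
  let ?La = "1 - fps_const (a * q ^ N) * fps_X"
  let ?Lb = "1 - fps_const (b * q ^ N / q) * fps_X"
  define W where "W = qpoch a q (int N) * inverse (qpoch b q (int N))"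
  have "W * ?Lb = qpoch a q (int N) * inverse (qpoch b q (int N - 1)) * (inverse ?Lb * ?Lb)"
    by (simp add: W_def qpoch_eq_qpoch_pred_mult[OF assms, of b N] fps_inverse_mult mult_ac)
  then have U: "qpoch a q (int N) * inverse (qpoch b q (int N - 1)) = W * ?Lb"
    by (simp add: inverse_mult_eq_1)
  have U_Suc: "qpoch a q (int (Suc N)) * inverse (qpoch b q (int (Suc N) - 1)) = W * ?La"
    by (simp add: W_def qpoch_Suc mult_ac del: of_nat_Suc)
  have "fps_const (?H N $ N) * qbasis a b q N
          - fps_const (a * q ^ N * ?H (Suc N) $ N) * fps_X * qbasis a b q N
      = W * (fps_const (?H N $ N) * fps_X ^ N
             - fps_const (a * q ^ N * ?H (Suc N) $ N) * fps_X ^ Suc N)"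
    by (simp add: qbasis_def W_def algebra_simps)
  also have "\<dots> = W * (?La * fps_cutoff (Suc N) (?H (Suc N)) - ?Lb * fps_cutoff N (?H N))"
    by (simp only: fps_cutoff_linear_factor_step[OF qreduced_Suc[OF assms]])
  finally have last_term: "fps_const (?H N $ N) * qbasis a b q N
          - fps_const (a * q ^ N * ?H (Suc N) $ N) * fps_X * qbasis a b q N
      = W * (?La * fps_cutoff (Suc N) (?H (Suc N)) - ?Lb * fps_cutoff N (?H N))" .
  show ?case
    unfolding sum.lessThan_Suc Suc.IH U U_Suc last_term by (simp add: algebra_simps)
qed

lemma fps_X_power_dvd_qreduced_remainder:
  assumes "q \<noteq> 0"
  shows "fps_X ^ N dvd F - (\<Sum>n<N. fps_const (qreduced a b q F n $ n) * qbasis a b q n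
            - fps_const (a * q ^ n * qreduced a b q F (Suc n) $ n) * fps_X * qbasis a b q n)"
proof -
  let ?U = "qpoch a q (int N) * inverse (qpoch b q (int N - 1))"
  let ?H = "qreduced a b q F N"
  have "F - ?U * fps_cutoff N ?H = ?U * (?H - fps_cutoff N ?H)"
    using qreduced_cancel[of a q N b F] by (simp add: algebra_simps)
  moreover have "fps_X ^ N dvd ?H - fps_cutoff N ?H"
    by (simp add: fps_X_power_dvd_iff)
  ultimately show ?thesis
    by (simp add: qreduced_telescoping[OF assms])
qed

lemma fps_X_power_dvd_qbasis_reexpansion:
  fixes B d :: "nat \<Rightarrow> complex"
  assumes "(\<lambda>n. fps_const (B (Suc n)) * qbasis a b q (Suc n)) sums fps_X"
  shows "fps_X ^ N dvd (\<Sum>k<N. fps_const (d k * q ^ k) * fps_X * qbasis a b q k)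
      - (\<Sum>n<N. \<Sum>k<n. fps_const (B (n - k) * q ^ ((n - k) * k) * d k) * qbasis a b q n)"
proof -
  define S where "S M = (\<Sum>j<M. fps_const (B (Suc j)) * qbasis a b q (Suc j))" for M
  have S_remainder: "fps_X ^ Suc M dvd fps_X - S M" for M
    unfolding S_def
    by (rule sums_fps_remainder_dvd[OF assms], rule dvd_mult,
        rule power_le_dvd[OF fps_X_power_dvd_qbasis]) simp
  have inner: "(\<Sum>n\<in>{Suc k..<N}. fps_const (B (n - k) * q ^ ((n - k) * k) * d k) * qbasis a b q n)
      = fps_const (d k) * qbasis a b q k * (S (N - Suc k) oo (fps_const (q ^ k) * fps_X))"
    if "k < N" for k
  proof -
    have "{Suc k..<N} = {0 + Suc k..<(N - Suc k) + Suc k}"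
      using that by simp
    then have "(\<Sum>n\<in>{Suc k..<N}. fps_const (B (n - k) * q ^ ((n - k) * k) * d k) * qbasis a b q n)
        = (\<Sum>j<N - Suc k. fps_const (B (j + Suc k - k) * q ^ ((j + Suc k - k) * k) * d k)
             * qbasis a b q (j + Suc k))"
      by (simp only: sum.shift_bounds_nat_ivl lessThan_atLeast0)
    also have "\<dots> = (\<Sum>j<N - Suc k. fps_const (d k) * fps_const (B (Suc j))
             * (fps_const (q ^ (Suc j * k)) * qbasis a b q (k + Suc j)))"
      by (simp add: add.commute mult_ac flip: fps_const_mult)
    also have "\<dots> = (\<Sum>j<N - Suc k. fps_const (d k) * fps_const (B (Suc j))
             * (qbasis a b q k * (qbasis a b q (Suc j) oo (fps_const (q ^ k) * fps_X))))"
      by (simp only: qbasis_mult_compose_linear)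
    also have "\<dots> = fps_const (d k) * qbasis a b q k * (S (N - Suc k) oo (fps_const (q ^ k) * fps_X))"
      by (simp add: S_def fps_compose_sum_distrib sum_distrib_left mult_ac
          flip: fps_const_mult_apply_left fps_const_mult)
    finally show ?thesis .
  qed
  have "(\<Sum>k<N. fps_const (d k * q ^ k) * fps_X * qbasis a b q k)
      - (\<Sum>n<N. \<Sum>k<n. fps_const (B (n - k) * q ^ ((n - k) * k) * d k) * qbasis a b q n)
      = (\<Sum>k<N. fps_const (d k * q ^ k) * fps_X * qbasis a b q k
           - (\<Sum>n\<in>{Suc k..<N}. fps_const (B (n - k) * q ^ ((n - k) * k) * d k) * qbasis a b q n))"
    by (simp only: sum_lessThan_nested_swap sum_subtractf)
  also have "\<dots> = (\<Sum>k<N. fps_const (d k) * qbasis a b q k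
           * ((fps_X - S (N - Suc k)) oo (fps_const (q ^ k) * fps_X)))"
  proof (rule sum.cong[OF refl])
    fix k assume "k \<in> {..<N}"
    then have "k < N" by simp
    then show "fps_const (d k * q ^ k) * fps_X * qbasis a b q k
        - (\<Sum>n\<in>{Suc k..<N}. fps_const (B (n - k) * q ^ ((n - k) * k) * d k) * qbasis a b q n)
      = fps_const (d k) * qbasis a b q k * ((fps_X - S (N - Suc k)) oo (fps_const (q ^ k) * fps_X))"
      unfolding inner[OF \<open>k < N\<close>]
      by (simp add: fps_compose_sub_distrib fps_X_compose_linear right_diff_distrib mult_ac
          flip: fps_const_mult)
  qed
  also have "fps_X ^ N dvd \<dots>"
  proof (intro dvd_sum)
    fix k assume "k \<in> {..<N}"
    then have "fps_X ^ N = fps_X ^ k * fps_X ^ Suc (N - Suc k)"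
      by (subst power_add[symmetric]) simp
    moreover have "fps_X ^ Suc (N - Suc k) dvd (fps_X - S (N - Suc k)) oo (fps_const (q ^ k) * fps_X)"
      by (intro fps_X_power_dvd_compose_linear S_remainder)
    then have "fps_X ^ k * fps_X ^ Suc (N - Suc k)
        dvd qbasis a b q k * ((fps_X - S (N - Suc k)) oo (fps_const (q ^ k) * fps_X))"
      by (rule mult_dvd_mono[OF fps_X_power_dvd_qbasis])
    ultimately show "fps_X ^ N dvd fps_const (d k) * qbasis a b q k
        * ((fps_X - S (N - Suc k)) oo (fps_const (q ^ k) * fps_X))"
      by (metis dvd_mult mult.assoc)
  qed
  finally show ?thesis .
qed

definition qexp_coeff ::
    "complex \<Rightarrow> complex \<Rightarrow> complex \<Rightarrow> (nat \<Rightarrow> complex) \<Rightarrow> complex fps \<Rightarrow> nat \<Rightarrow> complex" where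
  "qexp_coeff a b q B F n = qreduced a b q F n $ n
     - a * (\<Sum>k<n. B (n - k) * q ^ ((n - k) * k) * qreduced a b q F (Suc k) $ k)"

lemma qbasis_expansion:
  assumes "q \<noteq> 0"
    and "(\<lambda>n. fps_const (B (Suc n)) * qbasis a b q (Suc n)) sums fps_X"
  shows "(\<lambda>n. fps_const (qexp_coeff a b q B F n) * qbasis a b q n) sums F"
proof (rule sums_fps_if_remainders_dvd)
  fix N
  let ?H = "qreduced a b q F" and ?P = "qbasis a b q"
  define d where "d k = ?H (Suc k) $ k" for k
  define A where "A = (\<Sum>n<N. fps_const (?H n $ n) * ?P n)"
  define T where "T = (\<Sum>n<N. fps_const (?H n $ n) * ?P n - fps_const (a * q ^ n * d n) * fps_X * ?P n)"
  define E where "E = (\<Sum>k<N. fps_const (d k * q ^ k) * fps_X * ?P k)"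
  define D where "D = (\<Sum>n<N. \<Sum>k<n. fps_const (B (n - k) * q ^ ((n - k) * k) * d k) * ?P n)"
  have partial_sum: "(\<Sum>n<N. fps_const (qexp_coeff a b q B F n) * ?P n) = A - fps_const a * D"
    unfolding A_def D_def qexp_coeff_def d_def
    by (simp add: fps_const_sum sum_distrib_left sum_distrib_right sum_subtractf
        left_diff_distrib mult.assoc flip: fps_const_mult fps_const_sub)
  have "T = A - fps_const a * E"
    unfolding T_def A_def E_def
    by (simp add: sum_subtractf sum_distrib_left mult.assoc mult.left_commute flip: fps_const_mult)
  then have regroup: "F - (A - fps_const a * D) = (F - T) - fps_const a * (E - D)"
    by (simp add: algebra_simps)
  have remainder_T: "fps_X ^ N dvd F - T"
    unfolding T_def d_def by (rule fps_X_power_dvd_qreduced_remainder[OF assms(1)])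
  have remainder_ED: "fps_X ^ N dvd E - D"
    unfolding E_def D_def by (rule fps_X_power_dvd_qbasis_reexpansion[OF assms(2)])
  show "fps_X ^ N dvd F - (\<Sum>n<N. fps_const (qexp_coeff a b q B F n) * ?P n)"
    unfolding partial_sum regroup by (rule dvd_diff[OF remainder_T dvd_mult[OF remainder_ED]])
qed

theorem theorem1p1:
  fixes a b q :: complex and F :: "complex fps" and B :: "nat \<Rightarrow> complex"
  assumes hq: "q \<noteq> 0"
    and hB: "(\<lambda>n. fps_const (B (Suc n)) * qbasis a b q (Suc n)) sums fps_X"
  shows "(\<lambda>n. fps_const
            (fps_nth (F * qpoch b q (int n - 1) * inverse (qpoch a q (int n))) n
             - a * (\<Sum>k<n. B (n - k) * q ^ ((n - k) * k) *
                     fps_nth (F * qpoch b q (int k) * inverse (qpoch a q (int k + 1))) k))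
          * qbasis a b q n) sums F"
proof -
  have "qexp_coeff a b q B F n
      = fps_nth (F * qpoch b q (int n - 1) * inverse (qpoch a q (int n))) n
        - a * (\<Sum>k<n. B (n - k) * q ^ ((n - k) * k) *
                 fps_nth (F * qpoch b q (int k) * inverse (qpoch a q (int k + 1))) k)" for n
    by (simp add: qexp_coeff_def qreduced_def add.commute)
  then show ?thesis
    using qbasis_expansion[OF hq hB, of F] by simp
qed

end
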